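(* Let $\Omega_2=\mathbb{R}\times\mathbb{R}$ (variables $(x,t)$) and let $\varepsilon\in(0,1)$. Define $w_\varepsilon:\Omega_2\to\mathbb{R}$ by $$w_\varepsilon(x,t)=\sum_{k=1}^\infty e^{-2^{(1+\varepsilon)k}}e^{-2^k x}\sin\big(2^{2k+1}t-2^k x\big).$$ Then $w_\varepsilon\in C^\infty(\Omega_2)$ and $w_\varepsilon$ satisfies the heat equation $\partial_t w_\varepsilon-\partial_x^2 w_\varepsilon=0$ on $\Omega_2$. For every fixed $x_0\in\mathbb{R}$, the function $t\mapsto w_\varepsilon(x_0,t)$ is not real analytic at any point $t_0\in\mathbb{R}$. Moreover, there exist positive constants $A_1,A_2$ depending only on $\varepsilon$ such that $$\sup_{x,t\in\mathbb{R}}|w_\varepsilon(x,t)|\exp\!\big(-A_2|x|^{1+\frac1\varepsilon}\big)\le A_1.$$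
   Context: A function of $t$ is real analytic at $t_0$ if its Taylor series at $t_0$ has positive radius of convergence and converges to the function on a neighborhood of $t_0$. *)

theory Defs
  imports "HOL-Analysis.Analysis"
begin

definition w_eps :: "real \<Rightarrow> real \<Rightarrow> real \<Rightarrow> real" where
  "w_eps \<epsilon> x t = (\<Sum>j. let k = real (Suc j) in
      exp (- (2 powr ((1 + \<epsilon>) * k))) * exp (- (2 powr k) * x)
        * sin (2 powr (2 * k + 1) * t - 2 powr k * x))"

definition dx :: "(real \<Rightarrow> real \<Rightarrow> real) \<Rightarrow> real \<Rightarrow> real \<Rightarrow> real" where
  "dx f x t = deriv (\<lambda>y. f y t) x"

definition dt :: "(real \<Rightarrow> real \<Rightarrow> real) \<Rightarrow> real \<Rightarrow> real \<Rightarrow> real" where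
  "dt f x t = deriv (\<lambda>s. f x s) t"

fun partials :: "bool list \<Rightarrow> (real \<Rightarrow> real \<Rightarrow> real) \<Rightarrow> real \<Rightarrow> real \<Rightarrow> real" where
  "partials [] f = f"
| "partials (b # bs) f = (if b then dx else dt) (partials bs f)"

definition smooth2 :: "(real \<Rightarrow> real \<Rightarrow> real) \<Rightarrow> bool" where
  "smooth2 f \<longleftrightarrow> (\<forall>ops.
     continuous_on UNIV (\<lambda>p. partials ops f (fst p) (snd p)) \<and>
     (\<forall>x t. (\<lambda>y. partials ops f y t) differentiable (at x) \<and>
            (\<lambda>s. partials ops f x s) differentiable (at t)))"

definition real_analytic_at :: "(real \<Rightarrow> real) \<Rightarrow> real \<Rightarrow> bool" where
  "real_analytic_at f t0 \<longleftrightarrow> (\<exists>r>0. \<forall>t. \<bar>t - t0\<bar> < r \<longrightarrow>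
     (\<lambda>n. (deriv ^^ n) f t0 / fact n * (t - t0) ^ n) sums f t)"

end

theory Submission imports Defs begin

text \<open>With \<open>\<lambda> = 2^k\<close>, the \<open>k\<close>-th summand of \<open>w\<close> is \<open>exp (-\<lambda>^(1+\<epsilon>)) Im exp (\<alpha> x + \<beta> t)\<close>
  where \<open>\<alpha> = -(1+i)\<lambda>\<close> and \<open>\<beta> = 2i\<lambda>^2 = \<alpha>^2\<close>; so it solves the heat equation, and its
  derivative \<open>\<partial>\<^sub>x^a \<partial>\<^sub>t^b\<close> is bounded by \<open>(2\<lambda>)^(a+2b) exp (\<lambda>|x| - \<lambda>^(1+\<epsilon>))\<close>, which
  is summable in \<open>k\<close> locally uniformly in \<open>x\<close>. Hence every termwise differentiated series
  converges locally uniformly, which gives smoothness and the heat equation, and the growth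
  bound follows from \<open>\<lambda>|x| \<le> \<lambda>^(1+\<epsilon>)/2 + 2^(1/\<epsilon>) |x|^(1+1/\<epsilon>)\<close>.

  If \<open>t \<mapsto> w(x\<^sub>0,t)\<close> were analytic at \<open>t\<^sub>0\<close>, the Cauchy estimates
  \<open>|\<partial>\<^sub>t^m w(x\<^sub>0,t\<^sub>0)| \<le> C m! \<rho>^m\<close> would hold. For a large \<open>k\<close> and an order
  \<open>m \<approx> 5/8 \<lambda>^(1+\<epsilon>)\<close>, the \<open>k\<close>-th summand of the series for \<open>\<partial>\<^sub>t^m w\<close> (or for
  \<open>\<partial>\<^sub>t^(m+1) w\<close>) dominates all the others, and its size
  \<open>exp (-\<lambda>^(1+\<epsilon>)) (2\<lambda>^2)^m exp (-\<lambda>x\<^sub>0)\<close> beats \<open>C m! \<rho>^m\<close> because \<open>m\<close> is of order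
  \<open>\<lambda>^(1+\<epsilon>)\<close>, much smaller than \<open>\<lambda>^2\<close>; this is where \<open>\<epsilon> < 1\<close> is used.\<close>

section \<open>The modes and their frequencies\<close>

text \<open>Summands are indexed from \<open>j = 0\<close>: \<open>freq j\<close> is the \<open>2^k\<close> of the summand \<open>k = j + 1\<close>.\<close>
definition freq :: "nat \<Rightarrow> real" where "freq j = 2 ^ Suc j"

definition alpha :: "nat \<Rightarrow> complex" where "alpha j = - (1 + \<i>) * of_real (freq j)"

definition beta :: "nat \<Rightarrow> complex" where "beta j = \<i> * of_real (2 * freq j ^ 2)"

text \<open>\<open>mode_deriv e a b j\<close> is \<open>\<partial>\<^sub>x^a \<partial>\<^sub>t^b\<close> of the summand \<open>j\<close>; \<open>w_deriv e a b\<close> will turn out to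
  be \<open>\<partial>\<^sub>x^a \<partial>\<^sub>t^b w\<close>.\<close>
definition mode_deriv :: "real \<Rightarrow> nat \<Rightarrow> nat \<Rightarrow> nat \<Rightarrow> real \<Rightarrow> real \<Rightarrow> real" where
  "mode_deriv e a b j x t = exp (- (freq j powr (1+e))) *
     Im (alpha j ^ a * beta j ^ b * exp (alpha j * of_real x + beta j * of_real t))"

definition w_deriv :: "real \<Rightarrow> nat \<Rightarrow> nat \<Rightarrow> real \<Rightarrow> real \<Rightarrow> real" where
  "w_deriv e a b x t = (\<Sum>j. mode_deriv e a b j x t)"

lemma freq_pos: "freq j > 0" by (simp add: freq_def)

lemma freq_Suc: "freq (Suc j) = 2 * freq j" by (simp add: freq_def)

lemma freq_ge_Suc: "freq j \<ge> real j + 1"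
proof -
  have "real (Suc j) < 2 ^ Suc j" by (metis of_nat_less_two_power)
  thus ?thesis by (simp add: freq_def)
qed

lemma one_le_freq: "freq j \<ge> 1" using freq_ge_Suc[of j] by simp

lemma double_freq_le: "j < K \<Longrightarrow> 2 * freq j \<le> freq K"
proof -
  assume "j < K"
  hence "(2::real) ^ Suc (Suc j) \<le> 2 ^ Suc K" by (intro power_increasing) auto
  thus ?thesis by (simp add: freq_def)
qed

lemma ln_freq: "ln (freq j) = (real j + 1) * ln 2"
proof -
  have "ln (freq j) = ln (2 ^ Suc j)" by (simp add: freq_def)
  also have "\<dots> = real (Suc j) * ln 2" by (rule ln_realpow)
  finally show ?thesis by simp
qed

lemma freq_powr_ge_linear: assumes "0 \<le> e" shows "freq j powr e \<ge> e * ln 2 * (real j + 1)"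
proof -
  have "freq j powr e = exp (e * ln (freq j))" using freq_pos[of j] by (simp add: powr_def)
  also have "\<dots> \<ge> 1 + e * ln (freq j)" by (rule exp_ge_add_one_self)
  finally show ?thesis using ln_freq[of j] by (simp add: mult_ac)
qed

lemma eventually_freq_powr_ge:
  assumes "0 < e" shows "eventually (\<lambda>j. freq j powr e \<ge> B) sequentially"
proof -
  obtain n :: nat where n: "B / (e * ln 2) < real n" using reals_Archimedean2 by blast
  have p: "e * ln 2 > 0" using assms by simp
  show ?thesis unfolding eventually_sequentially
  proof (intro exI allI impI)
    fix j assume "n \<le> j"
    hence "B < e * ln 2 * real j" using n p
      by (smt (verit, ccfv_SIG) divide_less_eq mult.commute mult_left_mono of_nat_mono)
    also have "\<dots> \<le> e * ln 2 * (real j + 1)" using p by (intro mult_left_mono) auto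
    also have "\<dots> \<le> freq j powr e" using assms by (intro freq_powr_ge_linear) simp
    finally show "B \<le> freq j powr e" by simp
  qed
qed

lemma freq_powr_one_plus: "freq j powr (1 + e) = freq j * freq j powr e"
  using freq_pos[of j] by (simp add: powr_add)

lemma freq_le_freq_powr: "0 \<le> e \<Longrightarrow> freq j \<le> freq j powr (1+e)"
  unfolding freq_powr_one_plus using one_le_freq[of j] ge_one_powr_ge_zero[of "freq j" e]
  by (simp add: mult_le_cancel_left1)

lemma norm_alpha_le: "norm (alpha j) \<le> 2 * freq j"
proof -
  have "norm (alpha j) = norm (-(1 + \<i>)) * norm (of_real (freq j) :: complex)"
    by (simp only: alpha_def norm_mult)
  hence "norm (alpha j) = norm (1 + \<i>) * freq j" using freq_pos[of j]
    by (simp only: norm_minus_cancel norm_of_real abs_of_pos)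
  also have "norm (1 + \<i>) \<le> (2::real)"
    by (smt (verit) norm_triangle_ineq norm_ii norm_one)
  finally show ?thesis using freq_pos[of j] by (simp add: mult_right_mono)
qed

lemma norm_beta: "norm (beta j) = 2 * freq j ^ 2"
  by (simp add: beta_def norm_mult norm_power)

lemma abs_mode_deriv_le:
  assumes "x \<ge> - R"
  shows "\<bar>mode_deriv e a b j x t\<bar> \<le> (2 * freq j) ^ (a + 2*b) * exp (freq j * R - freq j powr (1+e))"
proof -
  have l: "freq j > 0" by (rule freq_pos)
  have four: "(4::real)^b = 2^(b*2)" by (induct b) auto
  have "\<bar>mode_deriv e a b j x t\<bar> \<le> exp (- (freq j powr (1+e))) *
     norm (alpha j ^ a * beta j ^ b * exp (alpha j * of_real x + beta j * of_real t))"
    unfolding mode_deriv_def abs_mult abs_exp_cancel by (intro mult_left_mono abs_Im_le_cmod) auto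
  also have "norm (alpha j ^ a * beta j ^ b * exp (alpha j * of_real x + beta j * of_real t))
     = norm (alpha j) ^ a * (2 * freq j ^ 2) ^ b * exp (- freq j * x)"
    by (simp add: norm_mult norm_power norm_beta) (simp add: alpha_def beta_def)
  also have "\<dots> \<le> (2 * freq j) ^ a * ((2 * freq j) ^ 2) ^ b * exp (freq j * R)"
  proof (intro mult_mono power_mono)
    show "norm (alpha j) \<le> 2 * freq j" by (rule norm_alpha_le)
    show "2 * freq j ^ 2 \<le> (2 * freq j) ^ 2" using l by (simp add: power2_eq_square)
    show "exp (- freq j * x) \<le> exp (freq j * R)" using l assms
      using mult_left_mono[of "-x" R "freq j"] by simp
  qed (use l in auto)
  finally have "\<bar>mode_deriv e a b j x t\<bar> \<le>
      exp (- (freq j powr (1+e))) * ((2 * freq j) ^ a * ((2 * freq j) ^ 2) ^ b * exp (freq j * R))"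
    using l by (simp add: mult_left_mono del: power_mult_distrib)
  also have "\<dots> = (2 * freq j) ^ (a + 2*b) * exp (freq j * R - freq j powr (1+e))"
    using four by (simp add: power_mult[symmetric] power_add exp_diff exp_minus field_simps)
  finally show ?thesis .
qed

abbreviation freq_majorant :: "real \<Rightarrow> nat \<Rightarrow> real \<Rightarrow> nat \<Rightarrow> real" where
  "freq_majorant e N R j \<equiv> (2 * freq j) ^ N * exp (freq j * R - freq j powr (1+e))"

lemma summable_freq_majorant: assumes "0 < e" shows "summable (freq_majorant e N R)"
proof (rule summable_comparison_test_ev)
  show "summable (\<lambda>j. exp (-1::real) ^ j)" by (rule summable_geometric) simp
  show "eventually (\<lambda>j. norm (freq_majorant e N R j) \<le> exp (-1) ^ j) sequentially"
    using eventually_freq_powr_ge[OF assms, of "2 * real N + R + 1"]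
  proof eventually_elim
    case (elim j)
    have l: "freq j > 0" by (rule freq_pos)
    have "(2 * freq j) ^ N \<le> exp (2 * freq j) ^ N"
      using l by (intro power_mono) (smt (verit) exp_ge_add_one_self, simp)
    also have "\<dots> = exp (2 * real N * freq j)" by (simp add: exp_of_nat_mult[symmetric] mult_ac)
    finally have pow: "(2 * freq j) ^ N \<le> exp (2 * real N * freq j)" .
    have "freq j powr (1+e) \<ge> freq j * (2 * real N + R + 1)"
      unfolding freq_powr_one_plus using elim l by (intro mult_left_mono) auto
    hence "2 * real N * freq j + (freq j * R - freq j powr (1+e)) \<le> - freq j"
      by (simp add: algebra_simps)
    also have "- freq j \<le> - real j" using freq_ge_Suc[of j] by simp
    finally have expo: "2 * real N * freq j + (freq j * R - freq j powr (1+e)) \<le> - real j" .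
    have "norm (freq_majorant e N R j) = freq_majorant e N R j" using l by simp
    also have "\<dots> \<le> exp (2 * real N * freq j) * exp (freq j * R - freq j powr (1+e))"
      using pow by (intro mult_right_mono) auto
    also have "\<dots> = exp (2 * real N * freq j + (freq j * R - freq j powr (1+e)))"
      by (simp add: exp_add)
    also have "\<dots> \<le> exp (- real j)" using expo by simp
    also have "\<dots> = exp (-1) ^ j" by (simp add: exp_of_nat_mult[symmetric])
    finally show ?case .
  qed
qed

lemma summable_abs_mode_deriv:
  assumes "0 < e" shows "summable (\<lambda>j. \<bar>mode_deriv e a b j x t\<bar>)"
proof (rule summable_comparison_test[OF _ summable_freq_majorant[OF assms, of "a+2*b" "\<bar>x\<bar>"]])
  show "\<exists>N. \<forall>j\<ge>N. norm \<bar>mode_deriv e a b j x t\<bar> \<le> freq_majorant e (a+2*b) \<bar>x\<bar> j"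
    using abs_mode_deriv_le[of "\<bar>x\<bar>" x e a b _ t] by simp
qed

lemma summable_mode_deriv: "0 < e \<Longrightarrow> summable (\<lambda>j. mode_deriv e a b j x t)"
  by (rule summable_rabs_cancel[OF summable_abs_mode_deriv])

lemma has_real_derivative_Im_cexp_affine:
  "((\<lambda>y::real. Im (c * exp (d * of_real y + k))) has_real_derivative
      Im (c * d * exp (d * of_real x + k))) (at x)"
proof -
  have "((\<lambda>z. c * exp (d * z + k)) has_field_derivative c * d * exp (d * of_real x + k)) (at (of_real x))"
    by (auto intro!: derivative_eq_intros simp: mult_ac)
  hence "((\<lambda>y::real. c * exp (d * of_real y + k)) has_vector_derivative c * d * exp (d * of_real x + k)) (at x)"
    by (rule has_vector_derivative_real_field)
  hence "((\<lambda>y::real. Im (c * exp (d * of_real y + k))) has_vector_derivative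
           Im (c * d * exp (d * of_real x + k))) (at x)"
    by (rule bounded_linear.has_vector_derivative[OF bounded_linear_Im])
  thus ?thesis by (simp add: has_real_derivative_iff_has_vector_derivative)
qed

lemma mode_deriv_has_derivative_x:
  "((\<lambda>y. mode_deriv e a b j y t) has_real_derivative mode_deriv e (Suc a) b j x t) (at x)"
  using DERIV_cmult[OF has_real_derivative_Im_cexp_affine, of "exp (- (freq j powr (1+e)))"
      "alpha j ^ a * beta j ^ b" "alpha j" "beta j * of_real t" x]
  unfolding mode_deriv_def by (simp add: mult_ac)

lemma mode_deriv_has_derivative_t:
  "((\<lambda>s. mode_deriv e a b j x s) has_real_derivative mode_deriv e a (Suc b) j x t) (at t)"
  using DERIV_cmult[OF has_real_derivative_Im_cexp_affine, of "exp (- (freq j powr (1+e)))"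
      "alpha j ^ a * beta j ^ b" "beta j" "alpha j * of_real x" t]
  unfolding mode_deriv_def by (simp add: mult_ac add.commute)

lemma w_deriv_has_derivative_x:
  assumes "0 < e"
  shows "((\<lambda>y. w_deriv e a b y t) has_real_derivative w_deriv e (Suc a) b x t) (at x)"
proof -
  define S where "S = {x - 1 <..< x + 1}"
  have "((\<lambda>y. \<Sum>j. mode_deriv e a b j y t) has_field_derivative (\<Sum>j. mode_deriv e (Suc a) b j x t)) (at x)"
  proof (rule has_field_derivative_series'(2)[of S "\<lambda>n y. mode_deriv e a b n y t" _ x])
    show "convex S" by (simp add: S_def)
    show "((\<lambda>y. mode_deriv e a b n y t) has_field_derivative mode_deriv e (Suc a) b n y t) (at y within S)"
      for n y by (rule has_field_derivative_at_within[OF mode_deriv_has_derivative_x])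
    show "uniformly_convergent_on S (\<lambda>n y. \<Sum>i<n. mode_deriv e (Suc a) b i y t)"
    proof (rule Weierstrass_m_test'[OF _ summable_freq_majorant[OF assms, of "Suc a + 2*b" "\<bar>x\<bar> + 1"]])
      fix n y assume "y \<in> S"
      hence "y \<ge> - (\<bar>x\<bar> + 1)" by (auto simp: S_def)
      thus "norm (mode_deriv e (Suc a) b n y t) \<le> freq_majorant e (Suc a + 2*b) (\<bar>x\<bar> + 1) n"
        using abs_mode_deriv_le[of "\<bar>x\<bar> + 1" y e "Suc a" b n t] by simp
    qed
    show "x \<in> S" "x \<in> interior S" by (auto simp: S_def)
    show "summable (\<lambda>n. mode_deriv e a b n x t)" by (rule summable_mode_deriv[OF assms])
  qed
  thus ?thesis by (simp add: w_deriv_def)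
qed

lemma w_deriv_has_derivative_t:
  assumes "0 < e"
  shows "((\<lambda>s. w_deriv e a b x s) has_real_derivative w_deriv e a (Suc b) x t) (at t)"
proof -
  have "((\<lambda>s. \<Sum>j. mode_deriv e a b j x s) has_field_derivative (\<Sum>j. mode_deriv e a (Suc b) j x t)) (at t)"
  proof (rule has_field_derivative_series'(2)[of UNIV "\<lambda>n s. mode_deriv e a b n x s" _ t])
    show "((\<lambda>s. mode_deriv e a b n x s) has_field_derivative mode_deriv e a (Suc b) n x s) (at s within UNIV)"
      for n s by (rule mode_deriv_has_derivative_t)
    show "uniformly_convergent_on UNIV (\<lambda>n s. \<Sum>i<n. mode_deriv e a (Suc b) i x s)"
    proof (rule Weierstrass_m_test'[OF _ summable_freq_majorant[OF assms, of "a + 2*Suc b" "\<bar>x\<bar>"]])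
      show "norm (mode_deriv e a (Suc b) n x s) \<le> freq_majorant e (a + 2*Suc b) \<bar>x\<bar> n" for n s
        using abs_mode_deriv_le[of "\<bar>x\<bar>" x e a "Suc b" n s] by simp
    qed
    show "summable (\<lambda>n. mode_deriv e a b n x t)" by (rule summable_mode_deriv[OF assms])
  qed auto
  thus ?thesis by (simp add: w_deriv_def)
qed

lemma continuous_on_w_deriv:
  assumes "0 < e"
  shows "continuous_on UNIV (\<lambda>p. w_deriv e a b (fst p) (snd p))"
proof (rule continuous_at_imp_continuous_on, intro ballI)
  fix p0 :: "real \<times> real"
  define S where "S = {p::real\<times>real. \<bar>fst p\<bar> < \<bar>fst p0\<bar> + 1}"
  have "open S" unfolding S_def by (intro open_Collect_less continuous_intros)
  have "uniform_limit S (\<lambda>n p. \<Sum>i<n. mode_deriv e a b i (fst p) (snd p))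
          (\<lambda>p. w_deriv e a b (fst p) (snd p)) sequentially"
    unfolding w_deriv_def
  proof (rule Weierstrass_m_test[OF _ summable_freq_majorant[OF assms, of "a + 2*b" "\<bar>fst p0\<bar> + 1"]])
    fix n p assume "p \<in> S"
    hence "fst p \<ge> - (\<bar>fst p0\<bar> + 1)" by (auto simp: S_def)
    thus "norm (mode_deriv e a b n (fst p) (snd p)) \<le> freq_majorant e (a + 2*b) (\<bar>fst p0\<bar> + 1) n"
      using abs_mode_deriv_le[of "\<bar>fst p0\<bar> + 1" "fst p" e a b n "snd p"] by simp
  qed
  hence "continuous_on S (\<lambda>p. w_deriv e a b (fst p) (snd p))"
  proof (rule uniform_limit_theorem[rotated])
    show "\<forall>\<^sub>F n in sequentially. continuous_on S (\<lambda>p. \<Sum>i<n. mode_deriv e a b i (fst p) (snd p))"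
      by (intro always_eventually allI continuous_intros) (simp add: mode_deriv_def, intro continuous_intros)
  qed simp
  moreover have "p0 \<in> S" by (simp add: S_def)
  ultimately show "isCont (\<lambda>p. w_deriv e a b (fst p) (snd p)) p0"
    using \<open>open S\<close> continuous_on_eq_continuous_at by blast
qed

section \<open>Smoothness and the heat equation\<close>

lemma mode_deriv_0_0:
  "mode_deriv e 0 0 j x t = (let k = real (Suc j) in
      exp (- (2 powr ((1 + e) * k))) * exp (- (2 powr k) * x)
        * sin (2 powr (2 * k + 1) * t - 2 powr k * x))"
proof -
  have freq: "2 powr real (Suc j) = freq j" unfolding freq_def by (rule powr_realpow) simp
  have freq_powr: "2 powr ((1 + e) * real (Suc j)) = freq j powr (1 + e)"
    by (simp add: freq[symmetric] powr_powr mult.commute)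
  have "2 powr (2 * real (Suc j) + 1) = 2 powr real (Suc j) * 2 powr real (Suc j) * 2 powr 1"
    by (simp only: powr_add[symmetric]) (simp add: algebra_simps)
  hence freq_sq: "2 powr (2 * real (Suc j) + 1) = 2 * freq j ^ 2"
    unfolding freq by (simp add: power2_eq_square)
  have "Im (exp (alpha j * of_real x + beta j * of_real t)) =
      exp (- freq j * x) * sin (2 * freq j ^ 2 * t - freq j * x)"
    by (simp add: Im_exp alpha_def beta_def algebra_simps)
  thus ?thesis unfolding Let_def freq freq_powr freq_sq mode_deriv_def by simp
qed

lemma w_eps_eq_w_deriv: "w_eps e = w_deriv e 0 0"
  by (intro ext) (simp add: w_eps_def w_deriv_def mode_deriv_0_0)

lemma dx_w_deriv: "0 < e \<Longrightarrow> dx (w_deriv e a b) = w_deriv e (Suc a) b"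
  by (intro ext) (simp add: dx_def DERIV_imp_deriv[OF w_deriv_has_derivative_x])

lemma dt_w_deriv: "0 < e \<Longrightarrow> dt (w_deriv e a b) = w_deriv e a (Suc b)"
  by (intro ext) (simp add: dt_def DERIV_imp_deriv[OF w_deriv_has_derivative_t])

lemma partials_w_eps:
  "0 < e \<Longrightarrow> partials ops (w_eps e) = w_deriv e (length (filter id ops)) (length (filter Not ops))"
  by (induction ops) (auto simp: w_eps_eq_w_deriv dx_w_deriv dt_w_deriv)

lemma smooth2_w_eps: "0 < e \<Longrightarrow> smooth2 (w_eps e)"
  unfolding smooth2_def partials_w_eps
  by (auto simp: continuous_on_w_deriv real_differentiable_def
           intro: w_deriv_has_derivative_x w_deriv_has_derivative_t)

lemma heat_equation_w_eps:
  assumes "0 < e" shows "dt (w_eps e) x t - dx (dx (w_eps e)) x t = 0"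
proof -
  have "beta j = alpha j ^ 2" for j
    by (simp add: alpha_def beta_def power2_eq_square algebra_simps)
  hence "mode_deriv e 0 1 j x t = mode_deriv e 2 0 j x t" for j
    by (simp add: mode_deriv_def)
  hence "w_deriv e 0 1 x t = w_deriv e 2 0 x t" by (simp add: w_deriv_def)
  thus ?thesis by (simp add: w_eps_eq_w_deriv dx_w_deriv dt_w_deriv assms numeral_2_eq_2)
qed

section \<open>The growth bound\<close>

lemma freq_abs_le_young:
  assumes e: "0 < e"
  shows "freq j * \<bar>x\<bar> - freq j powr (1+e) \<le> 2 powr (1/e) * \<bar>x\<bar> powr (1 + 1/e) - freq j powr (1+e) / 2"
proof (cases "freq j powr e \<ge> 2 * \<bar>x\<bar>")
  case True
  have "freq j * \<bar>x\<bar> \<le> freq j * (freq j powr e / 2)"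
    using True freq_pos[of j] by (intro mult_left_mono) auto
  hence "freq j * \<bar>x\<bar> \<le> freq j powr (1+e) / 2" by (simp add: freq_powr_one_plus)
  moreover have "0 \<le> 2 powr (1/e) * \<bar>x\<bar> powr (1 + 1/e)" by simp
  ultimately show ?thesis by linarith
next
  case False
  have l: "freq j > 0" by (rule freq_pos)
  hence x: "\<bar>x\<bar> > 0" using False by (smt (verit) powr_gt_zero)
  have "freq j = (freq j powr e) powr (1/e)" using e l by (simp add: powr_powr)
  also have "\<dots> < (2 * \<bar>x\<bar>) powr (1/e)" using False e by (intro powr_less_mono2) auto
  finally have "freq j * \<bar>x\<bar> \<le> (2 * \<bar>x\<bar>) powr (1/e) * \<bar>x\<bar>" using x by simp
  also have "\<dots> = 2 powr (1/e) * \<bar>x\<bar> powr (1 + 1/e)"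
    using x by (simp add: powr_mult powr_add)
  finally have "freq j * \<bar>x\<bar> \<le> 2 powr (1/e) * \<bar>x\<bar> powr (1 + 1/e)" .
  moreover have "0 \<le> freq j powr (1+e)" by simp
  ultimately show ?thesis by linarith
qed

lemma summable_exp_half_freq_powr:
  assumes "0 < e" shows "summable (\<lambda>j. exp (- (freq j powr (1+e) / 2)))"
proof (rule summable_comparison_test[OF _ summable_geometric[of "exp (-1/2) :: real"]])
  show "\<exists>N. \<forall>n\<ge>N. norm (exp (- (freq n powr (1 + e) / 2))) \<le> exp (- 1 / 2) ^ n"
  proof (intro exI[of _ 0] allI impI)
    fix n :: nat
    have "real n \<le> freq n powr (1+e)"
      using freq_ge_Suc[of n] freq_le_freq_powr[of e n] assms by simp
    hence "exp (- (freq n powr (1 + e) / 2)) \<le> exp (real n * (-1/2))" by simp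
    thus "norm (exp (- (freq n powr (1 + e) / 2))) \<le> exp (- 1 / 2) ^ n"
      by (simp add: exp_of_nat_mult[symmetric])
  qed
qed simp

lemma w_eps_growth_bound:
  assumes e: "0 < e"
  shows "\<exists>A1 A2. 0 < A1 \<and> 0 < A2 \<and>
         (\<forall>x t. \<bar>w_eps e x t\<bar> * exp (- A2 * \<bar>x\<bar> powr (1 + 1 / e)) \<le> A1)"
proof -
  define A2 where "A2 = (2::real) powr (1/e)"
  define S where "S = (\<Sum>j. exp (- (freq j powr (1+e) / 2)))"
  have "S \<ge> 0" unfolding S_def by (intro suminf_nonneg summable_exp_half_freq_powr e) simp
  have bound: "\<bar>w_eps e x t\<bar> * exp (- A2 * \<bar>x\<bar> powr (1 + 1 / e)) \<le> S" for x t
  proof -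
    define E where "E = exp (A2 * \<bar>x\<bar> powr (1 + 1 / e))"
    have mode: "\<bar>mode_deriv e 0 0 j x t\<bar> \<le> E * exp (- (freq j powr (1+e) / 2))" for j
    proof -
      have "\<bar>mode_deriv e 0 0 j x t\<bar> \<le> exp (freq j * \<bar>x\<bar> - freq j powr (1+e))"
        using abs_mode_deriv_le[of "\<bar>x\<bar>" x e 0 0 j t] by simp
      also have "\<dots> \<le> exp (A2 * \<bar>x\<bar> powr (1 + 1/e) - freq j powr (1+e) / 2)"
        using freq_abs_le_young[OF e, of j x] by (simp add: A2_def)
      also have "\<dots> = E * exp (- (freq j powr (1+e) / 2))"
        unfolding E_def exp_add[symmetric] by simp
      finally show ?thesis .
    qed
    have "\<bar>w_eps e x t\<bar> = \<bar>\<Sum>j. mode_deriv e 0 0 j x t\<bar>"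
      by (simp add: w_eps_eq_w_deriv w_deriv_def)
    also have "\<dots> \<le> (\<Sum>j. \<bar>mode_deriv e 0 0 j x t\<bar>)"
      by (rule summable_rabs[OF summable_abs_mode_deriv[OF e]])
    also have "\<dots> \<le> (\<Sum>j. E * exp (- (freq j powr (1+e) / 2)))"
      by (intro suminf_le mode summable_abs_mode_deriv e summable_mult summable_exp_half_freq_powr)
    also have "\<dots> = E * S" unfolding S_def by (intro suminf_mult summable_exp_half_freq_powr e)
    finally show ?thesis by (simp add: E_def exp_minus field_simps)
  qed
  have "0 < A2" by (simp add: A2_def)
  moreover have "\<forall>x t. \<bar>w_eps e x t\<bar> * exp (- A2 * \<bar>x\<bar> powr (1 + 1 / e)) \<le> S + 1"
    by (intro allI, rule order_trans[OF bound]) simp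
  moreover have "0 < S + 1" using \<open>S \<ge> 0\<close> by simp
  ultimately show ?thesis by blast
qed

section \<open>Failure of analyticity in time\<close>

text \<open>The modulus of the complex number whose imaginary part is \<open>mode_deriv e 0 m j x0 t\<close>;
  it does not depend on \<open>t\<close>.\<close>
definition mode_size :: "real \<Rightarrow> real \<Rightarrow> nat \<Rightarrow> nat \<Rightarrow> real" where
  "mode_size e x0 j m = exp (- (freq j powr (1+e))) * (2 * freq j ^ 2) ^ m * exp (- freq j * x0)"

definition log_mode_size :: "real \<Rightarrow> real \<Rightarrow> nat \<Rightarrow> nat \<Rightarrow> real" where
  "log_mode_size e x0 j m = - (freq j powr (1+e)) - freq j * x0 + real m * (ln 2 + 2 * (real j + 1) * ln 2)"

lemma mode_size_eq_exp: "mode_size e x0 j m = exp (log_mode_size e x0 j m)"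
proof -
  have l: "freq j > 0" by (rule freq_pos)
  have "ln (2 * freq j ^ 2) = ln 2 + 2 * ln (freq j)" using l by (simp add: ln_mult ln_realpow)
  hence "2 * freq j ^ 2 = exp (ln 2 + 2 * (real j + 1) * ln 2)"
    using l ln_freq[of j] by (metis exp_ln mult.assoc mult_pos_pos zero_less_numeral zero_less_power)
  hence "(2 * freq j ^ 2) ^ m = exp (real m * (ln 2 + 2 * (real j + 1) * ln 2))"
    by (simp add: exp_of_nat_mult[symmetric])
  hence "mode_size e x0 j m = exp (- (freq j powr (1+e))) * exp (real m * (ln 2 + 2 * (real j + 1) * ln 2)) * exp (- freq j * x0)"
    unfolding mode_size_def by simp
  also have "\<dots> = exp (log_mode_size e x0 j m)"
    unfolding log_mode_size_def by (simp only: exp_add[symmetric]) (simp add: algebra_simps)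
  finally show ?thesis .
qed

lemma mode_size_pos: "mode_size e x0 j m > 0" by (simp add: mode_size_eq_exp)

lemma abs_mode_deriv_le_mode_size: "\<bar>mode_deriv e 0 m j x0 t0\<bar> \<le> mode_size e x0 j m"
proof -
  have "\<bar>mode_deriv e 0 m j x0 t0\<bar> \<le> exp (- (freq j powr (1+e))) *
     norm (beta j ^ m * exp (alpha j * of_real x0 + beta j * of_real t0))"
    unfolding mode_deriv_def abs_mult abs_exp_cancel power_0 mult_1_left by (intro mult_left_mono abs_Im_le_cmod) auto
  also have "norm (beta j ^ m * exp (alpha j * of_real x0 + beta j * of_real t0))
     = (2 * freq j ^ 2) ^ m * exp (- freq j * x0)"
    by (simp add: norm_mult norm_power norm_beta) (simp add: alpha_def beta_def)
  finally show ?thesis by (simp add: mode_size_def mult_ac)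
qed

lemma log_mode_size_diff: "log_mode_size e x0 j m - log_mode_size e x0 K m =
   (freq K powr (1+e) - freq j powr (1+e)) + (freq K - freq j) * x0 - 2 * (real m * ln 2) * (real K - real j)"
  unfolding log_mode_size_def by (simp add: algebra_simps)

lemma mode_size_eq_mult_exp_diff:
  "mode_size e x0 j m = mode_size e x0 K m * exp (log_mode_size e x0 j m - log_mode_size e x0 K m)"
  by (simp add: mode_size_eq_exp exp_diff)

lemma freq_Suc_powr_le:
  assumes "e \<le> 1" shows "freq (Suc j) powr (1+e) \<le> 4 * freq j powr (1+e)"
proof -
  have "freq (Suc j) powr (1+e) = 2 powr (1+e) * freq j powr (1+e)"
    using freq_pos[of j] by (simp add: freq_Suc powr_mult)
  moreover have "2 powr (1+e) \<le> (2::real) powr 2" using assms by (intro powr_mono) auto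
  ultimately show ?thesis by (simp add: mult_right_mono)
qed

lemma freq_add_powr_ge:
  assumes "0 \<le> e" shows "2 ^ n * freq K powr (1+e) \<le> freq (n + K) powr (1+e)"
proof -
  have "freq (n + K) powr (1+e) = (2 ^ n) powr (1+e) * freq K powr (1+e)"
    by (simp add: freq_def power_add powr_mult)
  moreover have "(2::real) ^ n \<le> (2 ^ n) powr (1+e)"
    using powr_mono[of 1 "1+e" "(2::real) ^ n"] assms by simp
  ultimately show ?thesis by (simp add: mult_right_mono)
qed

lemma log_mode_size_lower_le:
  assumes e: "0 < e" "e \<le> 1" and jK: "j < K"
  and m: "5/8 * freq K powr (1+e) \<le> real m"
  and K: "12 * (\<bar>x0\<bar> + 40) \<le> freq K powr e"
  shows "log_mode_size e x0 j m - log_mode_size e x0 K m \<le> - (40 * freq K)"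
proof -
  define s where "s = freq K"
  define P where "P = freq K powr (1+e)"
  define M where "M = real m * ln 2"
  have s0: "s > 0" by (simp add: s_def freq_pos)
  have P0: "P \<ge> 0" by (simp add: P_def)
  have M: "5/12 * P \<le> M"
  proof -
    have "5/12 * P = (5/8 * P) * (2/3)" by simp
    also have "\<dots> \<le> real m * ln 2" using m ln2_ge_two_thirds P0 unfolding P_def
      by (intro mult_mono) auto
    finally show ?thesis by (simp add: M_def)
  qed
  have "2 * freq j \<le> s" using double_freq_le[OF jK] by (simp add: s_def)
  hence x0: "(s - freq j) * x0 \<le> s * \<bar>x0\<bar>"
    using freq_pos[of j] mult_left_mono[of x0 "\<bar>x0\<bar>" "s - freq j"] mult_right_mono[of "s - freq j" s "\<bar>x0\<bar>"]
    by linarith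
  have diff: "log_mode_size e x0 j m - log_mode_size e x0 K m =
      (P - freq j powr (1+e)) + (s - freq j) * x0 - 2 * M * (real K - real j)"
    unfolding log_mode_size_diff P_def s_def M_def ..
  have "log_mode_size e x0 j m - log_mode_size e x0 K m \<le> - (1/12) * P + s * \<bar>x0\<bar>"
  proof (cases "K = Suc j")
    case True
    hence "P \<le> 4 * freq j powr (1+e)" unfolding P_def using freq_Suc_powr_le[OF e(2)] by simp
    thus ?thesis unfolding diff using M x0 True by simp
  next
    case False
    hence "2 * M * 2 \<le> 2 * M * (real K - real j)" using jK M P0 by (intro mult_left_mono) auto
    thus ?thesis unfolding diff using M x0 P0 powr_ge_zero[of "freq j" "1+e"] by linarith
  qed
  moreover have "s * (12 * (\<bar>x0\<bar> + 40)) \<le> P"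
    unfolding P_def s_def freq_powr_one_plus using K freq_pos[of K] by (intro mult_left_mono) auto
  ultimately show ?thesis by (simp add: s_def algebra_simps)
qed

lemma lower_modes_small:
  assumes e: "0 < e" "e \<le> 1" and jK: "j < K"
  and m: "5/8 * freq K powr (1+e) \<le> real m"
  and K: "12 * (\<bar>x0\<bar> + 40) \<le> freq K powr e"
  shows "mode_size e x0 j m \<le> mode_size e x0 K m / (40 * freq K)"
proof -
  have s: "freq K > 0" by (rule freq_pos)
  have "exp (log_mode_size e x0 j m - log_mode_size e x0 K m) \<le> exp (- (40 * freq K))"
    using log_mode_size_lower_le[OF assms] by simp
  also have "\<dots> \<le> 1 / (40 * freq K)"
  proof -
    have "40 * freq K \<le> exp (40 * freq K)" using exp_ge_add_one_self[of "40 * freq K"] by linarith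
    thus ?thesis using s by (simp add: exp_minus field_simps)
  qed
  finally have "mode_size e x0 K m * exp (log_mode_size e x0 j m - log_mode_size e x0 K m)
      \<le> mode_size e x0 K m * (1 / (40 * freq K))"
    using mode_size_pos[of e x0 K m] by (intro mult_left_mono) auto
  thus ?thesis by (simp add: mode_size_eq_mult_exp_diff[of e x0 j m K])
qed

lemma log_mode_size_higher_le:
  assumes e: "0 \<le> e"
  and m: "real m \<le> 5/8 * freq K powr (1+e) + 2"
  and K: "8 * (\<bar>x0\<bar> + 9) \<le> freq K powr e"
  shows "log_mode_size e x0 (i + Suc K) m - log_mode_size e x0 K m \<le> - (6 * (real i + 1))"
proof -
  define j where "j = i + Suc K"
  define s where "s = freq K"
  define P where "P = freq K powr (1+e)"
  define M where "M = real m * ln 2"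
  define q where "q = (2::real) ^ Suc i"
  have s1: "s \<ge> 1" by (simp add: s_def one_le_freq)
  have P0: "P \<ge> 0" by (simp add: P_def)
  have M: "2 * M \<le> 125/144 * P + 25/9"
  proof -
    have "real m * ln 2 \<le> (5/8 * P + 2) * (25/36)" using m ln2_le_25_over_36 P0 unfolding P_def
      by (intro mult_mono) auto
    thus ?thesis by (simp add: M_def)
  qed
  have q: "real i + 1 \<le> q - 1"
  proof -
    have "Suc (Suc i) \<le> (2::nat) ^ Suc i" using less_exp[of "Suc i"] by simp
    hence "real (Suc (Suc i)) \<le> real ((2::nat) ^ Suc i)" by (rule of_nat_mono)
    thus ?thesis by (simp add: q_def)
  qed
  have "s * (8 * (\<bar>x0\<bar> + 9)) \<le> P"
    unfolding P_def s_def freq_powr_one_plus using K freq_pos[of K] by (intro mult_left_mono) auto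
  hence P_large: "8 * (s * \<bar>x0\<bar>) + 72 * s \<le> P" by (simp add: algebra_simps)
  have freq_j: "freq j = q * s" by (simp add: j_def s_def q_def freq_def power_add)
  have "q * P \<le> freq j powr (1+e)"
    using freq_add_powr_ge[OF e, of "Suc i" K] by (simp add: j_def q_def P_def)
  moreover have "(s - freq j) * x0 \<le> (q - 1) * (s * \<bar>x0\<bar>)"
    unfolding freq_j using mult_left_mono[of "-x0" "\<bar>x0\<bar>" "(q - 1) * s"] s1 q
    by (simp add: algebra_simps)
  ultimately have "log_mode_size e x0 j m - log_mode_size e x0 K m \<le>
      - ((q - 1) * (P - s * \<bar>x0\<bar>)) + 2 * M * (real i + 1)"
    unfolding log_mode_size_diff P_def s_def M_def by (simp add: j_def algebra_simps)
  also have "\<dots> \<le> - ((real i + 1) * (P - s * \<bar>x0\<bar> - 2 * M))"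
  proof -
    have "0 \<le> P - s * \<bar>x0\<bar>" using P_large s1 mult_nonneg_nonneg[of s "\<bar>x0\<bar>"] by linarith
    from mult_right_mono[OF q this] show ?thesis by (simp add: algebra_simps)
  qed
  also have "\<dots> \<le> - ((real i + 1) * 6)"
  proof -
    have "6 \<le> P - s * \<bar>x0\<bar> - 2 * M" using P_large M s1 mult_nonneg_nonneg[of s "\<bar>x0\<bar>"] by linarith
    from mult_left_mono[OF this, of "real i + 1"] show ?thesis by simp
  qed
  finally show ?thesis by (simp add: j_def)
qed

lemma exp_minus_one_le_half: "exp (-1::real) \<le> 1/2"
proof -
  have "2 < exp (1::real)" using ln_2_less_1 by (metis exp_less_mono exp_ln zero_less_numeral)
  thus ?thesis by (simp add: exp_minus field_simps)
qed

lemma higher_modes_small: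
  assumes "0 \<le> e"
  and "real m \<le> 5/8 * freq K powr (1+e) + 2"
  and "8 * (\<bar>x0\<bar> + 9) \<le> freq K powr e"
  shows "mode_size e x0 (i + Suc K) m \<le> mode_size e x0 K m * (1/64) * (1/2)^i"
proof -
  have "exp (log_mode_size e x0 (i + Suc K) m - log_mode_size e x0 K m) \<le> exp (- real (6 * Suc i))"
    using log_mode_size_higher_le[OF assms, of i] by simp
  also have "\<dots> = exp (-1) ^ (6 * Suc i)" by (simp add: exp_of_nat_mult[symmetric])
  also have "\<dots> \<le> (1/2) ^ (6 * Suc i)" by (intro power_mono exp_minus_one_le_half) simp
  also have "\<dots> = (1/64) * (1/64) ^ i"
  proof -
    have "(1/2::real) ^ 6 = 1/64" by (simp add: power_divide)
    thus ?thesis by (simp only: power_mult power_add) simp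
  qed
  also have "\<dots> \<le> (1/64) * (1/2) ^ i" by (intro mult_left_mono power_mono) auto
  finally have "mode_size e x0 K m * exp (log_mode_size e x0 (i + Suc K) m - log_mode_size e x0 K m)
      \<le> mode_size e x0 K m * ((1/64) * (1/2) ^ i)"
    using mode_size_pos[of e x0 K m] by (intro mult_left_mono) auto
  thus ?thesis by (metis mode_size_eq_mult_exp_diff mult.assoc)
qed

lemma abs_sum_lower_modes_le:
  assumes e: "0 < e" "e \<le> 1"
  and m: "5/8 * freq K powr (1+e) \<le> real m"
  and K: "12 * (\<bar>x0\<bar> + 40) \<le> freq K powr e"
  shows "\<bar>\<Sum>j<K. mode_deriv e 0 m j x0 t0\<bar> \<le> mode_size e x0 K m / 40"
proof -
  define T where "T = mode_size e x0 K m"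
  have "\<bar>\<Sum>j<K. mode_deriv e 0 m j x0 t0\<bar> \<le> (\<Sum>j<K. \<bar>mode_deriv e 0 m j x0 t0\<bar>)" by (rule sum_abs)
  also have "\<dots> \<le> (\<Sum>j<K. T / (40 * freq K))"
  proof (rule sum_mono)
    fix j assume "j \<in> {..<K}"
    hence "j < K" by simp
    from order_trans[OF abs_mode_deriv_le_mode_size lower_modes_small[OF e this m K]]
    show "\<bar>mode_deriv e 0 m j x0 t0\<bar> \<le> T / (40 * freq K)" by (simp add: T_def)
  qed
  also have "\<dots> = real K * T / (40 * freq K)" by simp
  also have "\<dots> \<le> T / 40"
  proof -
    have "real K * T \<le> freq K * T"
      using freq_ge_Suc[of K] mode_size_pos[of e x0 K m] by (intro mult_right_mono) (auto simp: T_def)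
    thus ?thesis using freq_pos[of K] by (simp add: field_simps)
  qed
  finally show ?thesis by (simp add: T_def)
qed

lemma abs_suminf_higher_modes_le:
  assumes e: "0 < e"
  and m: "real m \<le> 5/8 * freq K powr (1+e) + 2"
  and K: "8 * (\<bar>x0\<bar> + 9) \<le> freq K powr e"
  shows "\<bar>\<Sum>i. mode_deriv e 0 m (i + Suc K) x0 t0\<bar> \<le> mode_size e x0 K m / 32"
proof -
  define T where "T = mode_size e x0 K m"
  have abs_summable: "summable (\<lambda>i. \<bar>mode_deriv e 0 m (i + Suc K) x0 t0\<bar>)"
    using summable_ignore_initial_segment[OF summable_abs_mode_deriv[OF e]] .
  have geometric: "summable (\<lambda>i. T * (1/64) * (1/2::real) ^ i)"
    by (intro summable_mult summable_geometric) simp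
  have "\<bar>\<Sum>i. mode_deriv e 0 m (i + Suc K) x0 t0\<bar> \<le> (\<Sum>i. \<bar>mode_deriv e 0 m (i + Suc K) x0 t0\<bar>)"
    by (rule summable_rabs[OF abs_summable])
  also have "\<dots> \<le> (\<Sum>i. T * (1/64) * (1/2::real) ^ i)"
  proof (rule suminf_le[OF _ abs_summable geometric])
    show "\<bar>mode_deriv e 0 m (i + Suc K) x0 t0\<bar> \<le> T * (1/64) * (1/2::real) ^ i" for i
      using abs_mode_deriv_le_mode_size[of e m "i + Suc K" x0 t0] higher_modes_small[OF _ m K, of i] e
      by (simp add: T_def)
  qed
  also have "\<dots> = T * (1/64) * 2"
    by (subst suminf_mult) (auto simp: suminf_geometric)
  finally show ?thesis by (simp add: T_def)
qed

lemma w_deriv_t_ge_dominant_mode: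
  assumes e: "0 < e" "e \<le> 1"
  and m1: "5/8 * freq K powr (1+e) \<le> real m"
  and m2: "real m \<le> 5/8 * freq K powr (1+e) + 2"
  and K: "12 * (\<bar>x0\<bar> + 40) \<le> freq K powr e"
  and dominant: "7/10 * mode_size e x0 K m \<le> \<bar>mode_deriv e 0 m K x0 t0\<bar>"
  shows "3/5 * mode_size e x0 K m \<le> \<bar>w_deriv e 0 m x0 t0\<bar>"
proof -
  have "summable (\<lambda>j. mode_deriv e 0 m j x0 t0)" by (rule summable_mode_deriv[OF e(1)])
  from suminf_split_initial_segment[OF this, of "Suc K"]
  have "w_deriv e 0 m x0 t0 = (\<Sum>i. mode_deriv e 0 m (i + Suc K) x0 t0)
      + (\<Sum>j<K. mode_deriv e 0 m j x0 t0) + mode_deriv e 0 m K x0 t0"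
    by (simp add: w_deriv_def)
  moreover have "\<bar>\<Sum>i. mode_deriv e 0 m (i + Suc K) x0 t0\<bar> \<le> mode_size e x0 K m / 32"
    using K by (intro abs_suminf_higher_modes_le[OF e(1) m2]) simp
  moreover note abs_sum_lower_modes_le[OF e m1 K, of t0] dominant
  ultimately show ?thesis by linarith
qed


lemma abs_Re_or_abs_Im_ge: "7/10 * norm z \<le> \<bar>Re z\<bar> \<or> 7/10 * norm z \<le> \<bar>Im z\<bar>"
proof -
  have sq: "(7/10 * norm z) ^ 2 = 49/100 * norm z ^ 2" by (simp add: power2_eq_square)
  have norm: "norm z ^ 2 = \<bar>Re z\<bar> ^ 2 + \<bar>Im z\<bar> ^ 2" by (simp add: cmod_power2)
  have nonneg: "0 \<le> \<bar>Re z\<bar> ^ 2" "0 \<le> \<bar>Im z\<bar> ^ 2" by simp_all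
  show ?thesis
  proof (cases "\<bar>Im z\<bar> ^ 2 \<le> \<bar>Re z\<bar> ^ 2")
    case True
    hence "(7/10 * norm z) ^ 2 \<le> \<bar>Re z\<bar> ^ 2" using sq norm nonneg by linarith
    hence "7/10 * norm z \<le> \<bar>Re z\<bar>" by (rule power2_le_imp_le) simp
    thus ?thesis ..
  next
    case False
    hence "(7/10 * norm z) ^ 2 \<le> \<bar>Im z\<bar> ^ 2" using sq norm nonneg by linarith
    hence "7/10 * norm z \<le> \<bar>Im z\<bar>" by (rule power2_le_imp_le) simp
    thus ?thesis ..
  qed
qed

text \<open>\<open>\<partial>\<^sub>t\<close> multiplies the mode by \<open>beta K\<close>, a positive multiple of \<open>i\<close>, which turns its
  imaginary part into its real part; so one of two consecutive orders carries a large part of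
  the modulus.\<close>
lemma abs_mode_deriv_ge_mode_size_at_n_or_Suc_n:
  "7/10 * mode_size e x0 K n \<le> \<bar>mode_deriv e 0 n K x0 t0\<bar> \<or>
   7/10 * mode_size e x0 K (Suc n) \<le> \<bar>mode_deriv e 0 (Suc n) K x0 t0\<bar>"
proof -
  define c where "c = exp (- (freq K powr (1+e)))"
  define r where "r = 2 * freq K ^ 2"
  define v where "v = beta K ^ n * exp (alpha K * of_real x0 + beta K * of_real t0)"
  have c: "c > 0" by (simp add: c_def)
  have r: "r > 0" using freq_pos[of K] by (simp add: r_def)
  have "norm v = r ^ n * exp (- freq K * x0)"
    by (simp add: v_def r_def norm_mult norm_power norm_beta) (simp add: alpha_def beta_def)
  hence size_n: "mode_size e x0 K n = c * norm v" and size_Suc_n: "mode_size e x0 K (Suc n) = c * r * norm v"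
    by (simp_all add: mode_size_def c_def r_def)
  have deriv_n: "mode_deriv e 0 n K x0 t0 = c * Im v" by (simp add: mode_deriv_def c_def v_def)
  have "mode_deriv e 0 (Suc n) K x0 t0 = c * Im (beta K * v)"
    by (simp add: mode_deriv_def c_def v_def mult_ac)
  also have "beta K * v = \<i> * of_real r * v" by (simp add: beta_def r_def)
  finally have deriv_Suc_n: "mode_deriv e 0 (Suc n) K x0 t0 = c * r * Re v" by simp
  from abs_Re_or_abs_Im_ge[of v] show ?thesis
    unfolding size_n size_Suc_n deriv_n deriv_Suc_n abs_mult using c r by auto
qed

lemma fact_mult_power_le:
  assumes "real m \<le> P" "0 \<le> \<rho>" shows "fact m * \<rho> ^ m \<le> (P * \<rho>) ^ m"
proof -
  have "(fact m :: real) \<le> real m ^ m" using fact_le_power[of m] by simp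
  also have "\<dots> \<le> P ^ m" using assms by (intro power_mono) auto
  finally have "fact m * \<rho> ^ m \<le> P ^ m * \<rho> ^ m" using assms(2) by (intro mult_right_mono) auto
  thus ?thesis by (simp add: power_mult_distrib)
qed

lemma mode_size_ge_power:
  assumes rho: "0 < \<rho>"
  and m: "5/8 * freq K powr (1+e) \<le> real m"
  and K: "5 * \<rho> \<le> freq K powr (1-e)"
  shows "exp (freq K powr (1+e) / 4 - freq K * \<bar>x0\<bar>) * (freq K powr (1+e) * \<rho>) ^ m
    \<le> mode_size e x0 K m"
proof -
  define s where "s = freq K"
  define P where "P = freq K powr (1+e)"
  define W where "W = (P * \<rho>) ^ m"
  have s: "s \<ge> 1" by (simp add: s_def one_le_freq)
  have P: "P = s * freq K powr e" by (simp add: P_def s_def freq_powr_one_plus)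
  have P_rho: "0 \<le> P * \<rho>" using rho by (simp add: P_def)
  have W: "W > 0" using freq_pos[of K] rho by (simp add: W_def P_def)
  have "2 * s * freq K powr e * (5 * \<rho>) \<le> 2 * s * freq K powr e * freq K powr (1-e)"
    using K s by (intro mult_left_mono) auto
  also have "\<dots> = 2 * s ^ 2"
    using freq_pos[of K] by (simp add: s_def powr_add[symmetric] power2_eq_square)
  finally have "10 * (P * \<rho>) \<le> 2 * s ^ 2" by (simp add: P algebra_simps)
  hence "(9 * (P * \<rho>)) ^ m \<le> (2 * s ^ 2) ^ m" using P_rho by (intro power_mono) auto
  hence nine: "9 ^ m * W \<le> (2 * s ^ 2) ^ m" by (simp add: W_def power_mult_distrib)
  have "exp (5/4 * P) \<le> exp (2 * real m)" using m by (simp add: P_def)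
  also have "\<dots> = (exp 1 ^ 2) ^ m" by (simp add: exp_of_nat_mult[symmetric] mult.commute)
  also have "\<dots> \<le> ((3::real) ^ 2) ^ m" using exp_le by (intro power_mono) auto
  finally have "exp (5/4 * P) * W \<le> 9 ^ m * W" using W by (intro mult_right_mono) auto
  with nine have big: "exp (5/4 * P) * W \<le> (2 * s ^ 2) ^ m" by linarith
  have x0: "exp (- s * \<bar>x0\<bar>) \<le> exp (- s * x0)"
    using s mult_left_mono[of "-x0" "\<bar>x0\<bar>" s] by simp
  have "exp (P / 4 - s * \<bar>x0\<bar>) * W = exp (- P) * (exp (5/4 * P) * W) * exp (- s * \<bar>x0\<bar>)"
    by (simp add: exp_add[symmetric] algebra_simps)
  also have "\<dots> \<le> exp (- P) * (2 * s ^ 2) ^ m * exp (- s * x0)"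
  proof (rule mult_mono[OF _ x0])
    show "exp (- P) * (exp (5/4 * P) * W) \<le> exp (- P) * (2 * s ^ 2) ^ m"
      using big by (rule mult_left_mono) simp
  qed (use s in auto)
  also have "\<dots> = mode_size e x0 K m" by (simp add: mode_size_def P_def s_def)
  finally show ?thesis by (simp only: P_def s_def W_def)
qed

lemma factorial_bound_lt_mode_size:
  assumes C: "0 < C" and rho: "0 < \<rho>"
  and m1: "5/8 * freq K powr (1+e) \<le> real m"
  and m2: "real m \<le> 5/8 * freq K powr (1+e) + 2"
  and K: "4 * (\<bar>x0\<bar> + 2 * C) + 6 \<le> freq K powr e"
  and K': "5 * \<rho> \<le> freq K powr (1-e)"
  shows "C * fact m * \<rho> ^ m < 3/5 * mode_size e x0 K m"
proof -
  define s where "s = freq K"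
  define P where "P = freq K powr (1+e)"
  define W where "W = (P * \<rho>) ^ m"
  have s: "s \<ge> 1" by (simp add: s_def one_le_freq)
  have "s * (4 * (\<bar>x0\<bar> + 2 * C) + 6) \<le> P"
    unfolding P_def s_def freq_powr_one_plus using K freq_pos[of K] by (intro mult_left_mono) auto
  hence P_large: "4 * (s * \<bar>x0\<bar>) + 8 * (s * C) + 6 * s \<le> P" by (simp add: algebra_simps)
  have sC: "C \<le> s * C" "0 \<le> s * \<bar>x0\<bar>" using s C by simp_all
  have "P > 0" using P_large s sC C by linarith
  hence W: "W > 0" using rho by (simp add: W_def)
  have "real m \<le> P" using m2 P_large s sC C P_def by linarith
  hence "C * fact m * \<rho> ^ m \<le> C * W"
    using fact_mult_power_le[of m P \<rho>] C rho by (simp add: W_def mult.assoc)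
  also have "\<dots> < 3/5 * ((1 + 2 * C) * W)"
  proof -
    have "3/5 * ((1 + 2 * C) * W) = 3/5 * W + 6/5 * (C * W)" by (simp add: algebra_simps)
    thus ?thesis using W mult_pos_pos[OF C W] by linarith
  qed
  also have "(1 + 2 * C) * W \<le> exp (P / 4 - s * \<bar>x0\<bar>) * W"
  proof -
    have "1 + 2 * C \<le> exp (P / 4 - s * \<bar>x0\<bar>)"
      using exp_ge_add_one_self[of "P / 4 - s * \<bar>x0\<bar>"] P_large sC s by linarith
    thus ?thesis using W by (intro mult_right_mono) auto
  qed
  also have "\<dots> \<le> mode_size e x0 K m"
    using mode_size_ge_power[OF rho m1 K'] by (simp add: P_def s_def W_def)
  finally show ?thesis by simp
qed

lemma deriv_funpow_w_eps: "0 < e \<Longrightarrow> (deriv ^^ n) (\<lambda>t. w_eps e x0 t) = (\<lambda>t. w_deriv e 0 n x0 t)"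
proof (induction n)
  case 0 thus ?case by (simp add: w_eps_eq_w_deriv)
next
  case (Suc n)
  thus ?case by (auto intro!: ext DERIV_imp_deriv w_deriv_has_derivative_t)
qed

lemma real_analytic_at_deriv_bound:
  assumes "real_analytic_at f t0"
  obtains C \<rho> :: real where "0 < C" "0 < \<rho>" "\<And>n. \<bar>(deriv ^^ n) f t0\<bar> \<le> C * fact n * \<rho> ^ n"
proof -
  obtain r where r: "r > 0" and sums: "\<And>t. \<bar>t - t0\<bar> < r \<Longrightarrow>
     (\<lambda>n. (deriv ^^ n) f t0 / fact n * (t - t0) ^ n) sums f t"
    using assms unfolding real_analytic_at_def by blast
  have "(\<lambda>n. (deriv ^^ n) f t0 / fact n * (r/2) ^ n) \<longlonglongrightarrow> 0"
    using sums[of "t0 + r/2"] r by (simp add: sums_summable summable_LIMSEQ_zero)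
  hence "Bseq (\<lambda>n. (deriv ^^ n) f t0 / fact n * (r/2) ^ n)" by (intro convergent_imp_Bseq convergentI)
  then obtain C where C: "C > 0" and bound: "\<And>n. norm ((deriv ^^ n) f t0 / fact n * (r/2) ^ n) \<le> C"
    by (rule BseqE) blast
  have "\<bar>(deriv ^^ n) f t0\<bar> \<le> C * fact n * (2/r) ^ n" for n
  proof -
    define q where "q = (r/2) ^ n / fact n"
    have q: "q > 0" using r by (simp add: q_def)
    have "\<bar>(deriv ^^ n) f t0\<bar> * q \<le> C" using bound[of n] r by (simp add: abs_mult q_def)
    hence "\<bar>(deriv ^^ n) f t0\<bar> \<le> C / q" using q by (simp add: le_divide_eq)
    also have "C / q = C * fact n * (2/r) ^ n" using r by (simp add: q_def power_divide)
    finally show ?thesis .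
  qed
  with C r show ?thesis by (intro that[of C "2/r"]) auto
qed

lemma not_real_analytic_at_w_eps:
  assumes e: "0 < e" "e < 1"
  shows "\<not> real_analytic_at (\<lambda>t. w_eps e x0 t) t0"
proof
  assume analytic: "real_analytic_at (\<lambda>t. w_eps e x0 t) t0"
  obtain C \<rho> where C: "0 < C" and rho: "0 < \<rho>"
    and "\<And>n. \<bar>(deriv ^^ n) (\<lambda>t. w_eps e x0 t) t0\<bar> \<le> C * fact n * \<rho> ^ n"
    using real_analytic_at_deriv_bound[OF analytic] by blast
  hence cauchy: "\<bar>w_deriv e 0 n x0 t0\<bar> \<le> C * fact n * \<rho> ^ n" for n
    by (simp add: deriv_funpow_w_eps[OF e(1)])
  have "eventually (\<lambda>K. 12 * (\<bar>x0\<bar> + 40) \<le> freq K powr e \<and>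
      4 * (\<bar>x0\<bar> + 2 * C) + 6 \<le> freq K powr e \<and> 5 * \<rho> \<le> freq K powr (1-e)) sequentially"
    using e by (intro eventually_conj eventually_freq_powr_ge) auto
  then obtain K where K: "12 * (\<bar>x0\<bar> + 40) \<le> freq K powr e" "4 * (\<bar>x0\<bar> + 2 * C) + 6 \<le> freq K powr e"
    and K': "5 * \<rho> \<le> freq K powr (1-e)"
    unfolding eventually_sequentially by blast
  have no_dominant_order: False
    if m1: "5/8 * freq K powr (1+e) \<le> real m" and m2: "real m \<le> 5/8 * freq K powr (1+e) + 2"
     and dominant: "7/10 * mode_size e x0 K m \<le> \<bar>mode_deriv e 0 m K x0 t0\<bar>" for m
  proof -
    have "3/5 * mode_size e x0 K m \<le> \<bar>w_deriv e 0 m x0 t0\<bar>"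
      using w_deriv_t_ge_dominant_mode[OF e(1) _ m1 m2 K(1) dominant] e(2) by simp
    moreover have "C * fact m * \<rho> ^ m < 3/5 * mode_size e x0 K m"
      by (rule factorial_bound_lt_mode_size[OF C rho m1 m2 K(2) K'])
    ultimately show False using cauchy[of m] by simp
  qed
  define n where "n = nat \<lceil>5/8 * freq K powr (1+e)\<rceil>"
  have n: "5/8 * freq K powr (1+e) \<le> real n" "real n \<le> 5/8 * freq K powr (1+e) + 1"
    unfolding n_def using powr_ge_zero[of "freq K" "1+e"] by linarith+
  from abs_mode_deriv_ge_mode_size_at_n_or_Suc_n[of e x0 K n t0] show False
  proof
    assume "7/10 * mode_size e x0 K n \<le> \<bar>mode_deriv e 0 n K x0 t0\<bar>"
    with n show False by (intro no_dominant_order) auto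
  next
    assume "7/10 * mode_size e x0 K (Suc n) \<le> \<bar>mode_deriv e 0 (Suc n) K x0 t0\<bar>"
    with n show False by (intro no_dominant_order[of "Suc n"]) auto
  qed
qed

theorem theorem1p2:
  fixes \<epsilon> :: real
  assumes "0 < \<epsilon>" and "\<epsilon> < 1"
  shows "smooth2 (w_eps \<epsilon>)
    \<and> (\<forall>x t. dt (w_eps \<epsilon>) x t - dx (dx (w_eps \<epsilon>)) x t = 0)
    \<and> (\<forall>x0 t0. \<not> real_analytic_at (\<lambda>t. w_eps \<epsilon> x0 t) t0)
    \<and> (\<exists>A1 A2. 0 < A1 \<and> 0 < A2 \<and>
         (\<forall>x t. \<bar>w_eps \<epsilon> x t\<bar> * exp (- A2 * \<bar>x\<bar> powr (1 + 1 / \<epsilon>)) \<le> A1))"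
  using smooth2_w_eps[OF assms(1)] heat_equation_w_eps[OF assms(1)]
    not_real_analytic_at_w_eps[OF assms] w_eps_growth_bound[OF assms(1)]
  by blast

end
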